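(* Let $d$ be a prime power, $\mathbb{F}_d$ the finite field with $d$ elements, and $(p_{nm})_{n,m\in\mathbb{F}_d}$ a probability distribution on $\mathbb{F}_d\times\mathbb{F}_d$ (the Bell-diagonal probabilities of a two-qudit state, with $p_{00}$ the initial fidelity). Let $L_1,\dots,L_{d+1}$ be the sums of $p_{nm}$ over the $d+1$ lines through the origin, $\{(0,k):k\in\mathbb{F}_d\}$ and $\{(k,ak):k\in\mathbb{F}_d\}$ for $a\in\mathbb{F}_d$ (the weights of the $d+1$ mutually unbiased bases). If $p_{00}>\frac{d-1}{2d}$, then $\max_i L_i>1/2$; that is, the MUB-adapted mCAEPP satisfies the spectral dominance condition, so $p_{00}>\frac{d-1}{2d}$ is a sufficient initial-fidelity threshold for the MUB pre-processing strategy.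
   Context: Spectral dominance condition: after rotating the MUB line of maximal weight onto the primary (computational) axis by local operations, that primary axis carries weight $L_{\max}>1/2$. *)

theory Defs
  imports Complex_Main
begin

text \<open>The d+1 lines through the origin of F_d x F_d, indexed by 'a option:
  None is the vertical line {(0,k)}, Some a is the line {(k, a*k)}.\<close>
definition mub_line :: "'a::field option \<Rightarrow> ('a \<times> 'a) set" where
  "mub_line l = (case l of None \<Rightarrow> {(0, k) | k. True}
                          | Some a \<Rightarrow> {(k, a * k) | k. True})"

definition mub_weight :: "('a::{finite,field} \<Rightarrow> 'a \<Rightarrow> real) \<Rightarrow> 'a option \<Rightarrow> real" where
  "mub_weight p l = (\<Sum>(n, m)\<in>mub_line l. p n m)"

end

theory Submission
  imports Defs "HOL-Library.Cardinality"
begin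

text \<open>Every point other than the origin lies on exactly one of the d+1 lines through the origin,
  while the origin lies on all of them. Summing the line weights therefore counts every
  p_{nm} once and p_{00} a further d times, so the d+1 weights add up to 1 + d p_{00}.
  Their maximum is at least their average (1 + d p_{00}) / (d+1), which exceeds 1/2
  exactly when p_{00} > (d-1)/(2d).\<close>

lemma sum_sum_incidence:
  fixes f :: "'b \<Rightarrow> 'c::comm_semiring_1"
  assumes "finite I" "finite X"
  shows "(\<Sum>i\<in>I. \<Sum>x\<in>{x \<in> X. x \<in> B i}. f x) = (\<Sum>x\<in>X. of_nat (card {i \<in> I. x \<in> B i}) * f x)"
  using sum.swap_restrict[OF assms, of "\<lambda>i x. f x" "\<lambda>i x. x \<in> B i"] by simp

lemma mub_lines_through_origin: "{l. (0, 0) \<in> mub_line l} = UNIV"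
  by (auto simp: mub_line_def split: option.splits)

lemma mub_lines_through_point:
  fixes n m :: "'a::field"
  assumes "(n, m) \<noteq> (0, 0)"
  shows "{l. (n, m) \<in> mub_line l} = {if n = 0 then None else Some (m / n)}"
  using assms by (auto simp: mub_line_def split: option.splits)

lemma card_mub_lines_through:
  fixes x :: "'a::{finite,field} \<times> 'a"
  shows "card {l. x \<in> mub_line l} = (if x = (0, 0) then CARD('a) + 1 else 1)"
  by (cases x) (simp add: mub_lines_through_origin mub_lines_through_point)

lemma sum_mub_weight:
  fixes p :: "'a::{finite,field} \<Rightarrow> 'a \<Rightarrow> real"
  shows "(\<Sum>l\<in>UNIV. mub_weight p l) = (\<Sum>n\<in>UNIV. \<Sum>m\<in>UNIV. p n m) + CARD('a) * p 0 0"
proof -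
  have "(\<Sum>l\<in>UNIV. mub_weight p l)
      = (\<Sum>x\<in>UNIV. of_nat (card {l. x \<in> mub_line l}) * case_prod p x)"
    using sum_sum_incidence[of UNIV UNIV "case_prod p" mub_line] by (simp add: mub_weight_def)
  also have "\<dots> = (\<Sum>x\<in>UNIV. case_prod p x + (if x = (0, 0) then CARD('a) * p 0 0 else 0))"
    by (rule sum.cong) (auto simp: card_mub_lines_through algebra_simps)
  also have "\<dots> = (\<Sum>n\<in>UNIV. \<Sum>m\<in>UNIV. p n m) + CARD('a) * p 0 0"
    by (simp add: sum.distrib sum.cartesian_product)
  finally show ?thesis .
qed

theorem theorem3:
  fixes p :: "'a::{finite,field} \<Rightarrow> 'a \<Rightarrow> real"
  assumes nonneg: "\<And>n m. p n m \<ge> 0"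
    and total: "(\<Sum>n\<in>UNIV. \<Sum>m\<in>UNIV. p n m) = 1"
    and fid: "p 0 0 > (real (card (UNIV :: 'a set)) - 1) / (2 * real (card (UNIV :: 'a set)))"
  shows "Max (range (mub_weight p)) > 1 / 2"
proof -
  define d where "d = real CARD('a)"
  have "d > 0"
    by (simp add: d_def)
  then have "d * p 0 0 > (d - 1) / 2"
    using fid by (simp add: d_def field_simps)
  moreover have "1 + d * p 0 0 \<le> (d + 1) * Max (range (mub_weight p))"
  proof -
    have "(\<Sum>l\<in>UNIV. mub_weight p l) \<le> real CARD('a option) * Max (range (mub_weight p))"
      by (rule sum_bounded_above) simp
    then show ?thesis
      by (simp add: sum_mub_weight total d_def algebra_simps)
  qed
  ultimately have "(d + 1) * (1 / 2) < (d + 1) * Max (range (mub_weight p))"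
    by (simp add: algebra_simps)
  then show ?thesis
    using \<open>d > 0\<close> by simp
qed

end
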